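(* Let $\mathcal P_n$ be the set of pairs $(\lambda,\mu)$ of partitions $\lambda=(\lambda_1\ge\dots\ge\lambda_s>0)$, $\mu=(\mu_1\ge\dots\ge\mu_r>0)$ with $|\lambda|+|\mu|=n$ and $r$ even (these parametrize conjugacy classes of the Weyl group of $so_{2n}$). Define $\Phi(\lambda,\mu)$ to be the partition of $2n$ with parts $\lambda_1,\lambda_1,\lambda_2,\lambda_2,\dots,\lambda_s,\lambda_s$, $2\mu_1+1,\dots,2\mu_{r/2}+1$, $2\mu_{r/2+1}-1,\dots,2\mu_r-1$. Then $\Phi$ maps $\mathcal P_n$ onto the set of partitions of $2n$ in which every even part occurs with even multiplicity, and the restriction of $\Phi$ to the pairs with $\lambda=\emptyset$ is injective. *)

theory Defs
  imports Main
begin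

definition is_partition :: "nat list \<Rightarrow> bool" where
  "is_partition xs \<longleftrightarrow> sorted_wrt (\<ge>) xs \<and> (\<forall>x\<in>set xs. 0 < x)"

definition P :: "nat \<Rightarrow> (nat list \<times> nat list) set" where
  "P n = {(la, mu). is_partition la \<and> is_partition mu \<and>
                    sum_list la + sum_list mu = n \<and> even (length mu)}"

definition Phi :: "nat list \<times> nat list \<Rightarrow> nat list" where
  "Phi p = (case p of (la, mu) \<Rightarrow>
     rev (sort (concat (map (\<lambda>x. [x, x]) la)
               @ map (\<lambda>m. 2 * m + 1) (take (length mu div 2) mu)
               @ map (\<lambda>m. 2 * m - 1) (drop (length mu div 2) mu))))"

definition even_mult_partitions :: "nat \<Rightarrow> nat list set" where
  "even_mult_partitions m = {p. is_partition p \<and> sum_list p = m \<and>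
                              (\<forall>k. even k \<longrightarrow> even (count_list p k))}"

end

theory Submission
  imports Defs "HOL-Library.Multiset"
begin

text \<open>
  The parts of Phi (la, mu) are the parts of la taken twice together with the odd numbers
  2 mu_i + 1 and 2 mu_i - 1, so the even parts come in pairs. Conversely, a partition p whose even
  parts have even multiplicity decomposes as a multiset into A + A plus the set D of values of odd
  multiplicity, all of which are odd. Since the size of p is even, D has an even number 2r of
  elements; listing them strictly decreasingly, halving the first r by (z - 1)/2 and the last r by
  (z + 1)/2 gives mu, and strict decrease of the list is exactly what makes mu nonincreasing and
  positive. Then Phi (A, mu) = p. For la = [] the list of odd parts is already nonincreasing, so
  Phi ([], mu) determines it, and it determines mu.
\<close>

definition doubled :: "nat list \<Rightarrow> nat list" where
  "doubled xs = concat (map (\<lambda>x. [x, x]) xs)"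

definition odd_parts :: "nat list \<Rightarrow> nat list" where
  "odd_parts mu = map (\<lambda>m. 2 * m + 1) (take (length mu div 2) mu)
                @ map (\<lambda>m. 2 * m - 1) (drop (length mu div 2) mu)"

definition odd_parts_inv :: "nat list \<Rightarrow> nat list" where
  "odd_parts_inv ds = map (\<lambda>z. (z - 1) div 2) (take (length ds div 2) ds)
                    @ map (\<lambda>z. (z + 1) div 2) (drop (length ds div 2) ds)"

lemma Phi_eq: "Phi (la, mu) = rev (sort (doubled la @ odd_parts mu))"
  by (simp add: Phi_def doubled_def odd_parts_def)

lemma mset_doubled: "mset (doubled xs) = mset xs + mset xs"
  by (induction xs) (auto simp: doubled_def)

lemma sum_list_doubled: "sum_list (doubled xs) = 2 * sum_list xs"
  by (induction xs) (auto simp: doubled_def)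

lemma rev_sort_eq_self:
  assumes "sorted_wrt (\<ge>) xs" shows "rev (sort xs) = xs"
proof -
  have "sort xs = rev xs"
    using assms by (intro properties_for_sort) (simp_all add: sorted_wrt_rev)
  thus ?thesis by simp
qed

lemma rev_sort_eq_partition:
  assumes "is_partition p" and "mset xs = mset p"
  shows "rev (sort xs) = p"
proof -
  have "sort xs = rev p"
    using assms by (intro properties_for_sort) (auto simp: is_partition_def sorted_wrt_rev)
  thus ?thesis by simp
qed

lemma even_sum_list_odds:
  "(\<And>x. x \<in> set xs \<Longrightarrow> odd (x::nat)) \<Longrightarrow> even (sum_list xs) \<longleftrightarrow> even (length xs)"
  by (induction xs) auto

lemma odd_two_times_pred_div_two_succ: "odd (z::nat) \<Longrightarrow> 2 * ((z - 1) div 2) + 1 = z"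
  by presburger

lemma odd_two_times_succ_div_two_pred: "odd (z::nat) \<Longrightarrow> 2 * ((z + 1) div 2) - 1 = z"
  by presburger

lemma length_odd_parts [simp]: "length (odd_parts mu) = length mu"
  by (simp add: odd_parts_def)

lemma length_odd_parts_inv [simp]: "length (odd_parts_inv ds) = length ds"
  by (simp add: odd_parts_inv_def)

lemma odd_parts_odd:
  assumes "\<forall>m\<in>set mu. 0 < m" and "y \<in> set (odd_parts mu)"
  shows "odd y"
  using assms by (auto simp: odd_parts_def dest!: in_set_dropD elim!: gr0_implies_Suc)

lemma sum_list_odd_parts:
  assumes "\<forall>m\<in>set mu. 0 < m" and "even (length mu)"
  shows "sum_list (odd_parts mu) = 2 * sum_list mu"
proof -
  let ?h = "length mu div 2"
  have plus: "sum_list (map (\<lambda>m. 2 * m + 1) xs) = 2 * sum_list xs + length xs"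
    for xs :: "nat list"
    by (induction xs) auto
  have minus: "sum_list (map (\<lambda>m. 2 * m - 1) xs) + length xs = 2 * sum_list xs"
    if "\<forall>m\<in>set xs. 0 < m" for xs :: "nat list"
    using that by (induction xs) auto
  have "\<forall>m\<in>set (drop ?h mu). 0 < m"
    using assms(1) by (auto dest: in_set_dropD)
  note minus[OF this]
  moreover note plus[of "take ?h mu"]
  moreover have "sum_list mu = sum_list (take ?h mu) + sum_list (drop ?h mu)"
    by (metis append_take_drop_id sum_list_append)
  moreover have "length (take ?h mu) = ?h" "length (drop ?h mu) = ?h"
    using assms(2) by auto
  ultimately show ?thesis
    by (simp add: odd_parts_def) linarith
qed

lemma sorted_odd_parts:
  assumes "sorted_wrt (\<ge>) mu"
  shows "sorted_wrt (\<ge>) (odd_parts mu)"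
proof -
  let ?h = "length mu div 2"
  have "sorted_wrt (\<ge>) (take ?h mu @ drop ?h mu)"
    using assms by simp
  hence "sorted_wrt (\<ge>) (take ?h mu)" "sorted_wrt (\<ge>) (drop ?h mu)"
    and "\<forall>x\<in>set (take ?h mu). \<forall>y\<in>set (drop ?h mu). y \<le> x"
    unfolding sorted_wrt_append by blast+
  thus ?thesis
    unfolding odd_parts_def sorted_wrt_append sorted_wrt_map
    by (auto elim!: sorted_wrt_mono_rel[rotated]) (meson diff_le_self le_SucI le_trans mult_le_mono2)
qed

lemma odd_parts_inv_odd_parts:
  assumes "\<forall>m\<in>set mu. 0 < m"
  shows "odd_parts_inv (odd_parts mu) = mu"
proof -
  let ?h = "length mu div 2"
  have "map (\<lambda>z. (z + 1) div 2) (map (\<lambda>m. 2 * m - 1) (drop ?h mu)) = drop ?h mu"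
    using assms by (auto intro!: map_idI dest: in_set_dropD)
  thus ?thesis
    by (simp add: odd_parts_inv_def odd_parts_def comp_def)
qed

lemma odd_parts_odd_parts_inv:
  assumes "\<forall>z\<in>set ds. odd z"
  shows "odd_parts (odd_parts_inv ds) = ds"
proof -
  let ?h = "length ds div 2"
  have "map (\<lambda>m. 2 * m + 1) (map (\<lambda>z. (z - 1) div 2) (take ?h ds)) = take ?h ds"
    unfolding map_map
    by (rule map_idI) (metis assms odd_two_times_pred_div_two_succ comp_apply in_set_takeD)
  moreover have "map (\<lambda>m. 2 * m - 1) (map (\<lambda>z. (z + 1) div 2) (drop ?h ds)) = drop ?h ds"
    unfolding map_map
    by (rule map_idI) (metis assms odd_two_times_succ_div_two_pred comp_apply in_set_dropD)
  moreover have "length (odd_parts_inv ds) div 2 = ?h"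
    by (simp add: odd_parts_inv_def)
  ultimately show ?thesis
    by (simp add: odd_parts_def odd_parts_inv_def)
qed

lemma is_partition_odd_parts_inv:
  assumes dec: "sorted_wrt (>) ds" and odd: "\<forall>z\<in>set ds. odd z" and "even (length ds)"
  shows "is_partition (odd_parts_inv ds)"
proof -
  let ?h = "length ds div 2"
  have "sorted_wrt (>) (take ?h ds @ drop ?h ds)"
    using dec by simp
  hence dec_take: "sorted_wrt (>) (take ?h ds)" and dec_drop: "sorted_wrt (>) (drop ?h ds)"
    and gt: "\<forall>x\<in>set (take ?h ds). \<forall>y\<in>set (drop ?h ds). y < x"
    unfolding sorted_wrt_append by blast+
  have odd_take: "\<forall>x\<in>set (take ?h ds). odd x" and odd_drop: "\<forall>y\<in>set (drop ?h ds). odd y"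
    using odd by (auto dest: in_set_takeD in_set_dropD)
  have gap: "(y + 1) div 2 \<le> (x - 1) div 2" if "x \<in> set (take ?h ds)" "y \<in> set (drop ?h ds)" for x y
  proof -
    have "y < x" "odd x" "odd y"
      using gt odd_take odd_drop that by blast+
    thus ?thesis by (elim oddE) simp
  qed
  have pos_drop: "\<forall>y\<in>set (drop ?h ds). 0 < (y + 1) div 2"
    using odd_drop by (auto elim!: oddE)
  have pos_take: "0 < (x - 1) div 2" if x: "x \<in> set (take ?h ds)" for x
  proof -
    have "drop ?h ds \<noteq> []"
      using x \<open>even (length ds)\<close> by (auto dest: in_set_takeD)
    then obtain y where "y \<in> set (drop ?h ds)" by (metis ex_in_conv set_empty)
    with gap[OF x] pos_drop show ?thesis by fastforce
  qed
  have "sorted_wrt (\<ge>) (odd_parts_inv ds)"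
    unfolding odd_parts_inv_def sorted_wrt_append sorted_wrt_map
    using dec_take dec_drop gap
    by (auto elim!: sorted_wrt_mono_rel[rotated] intro: div_le_mono)
  thus ?thesis
    using pos_take pos_drop by (auto simp: is_partition_def odd_parts_inv_def)
qed

lemma finite_odd_count: "finite {x. odd (count M x)}"
  by (rule finite_subset[of _ "set_mset M"]) (auto intro: ccontr simp: not_in_iff)

lemma mset_eq_double_plus_odd_counts:
  fixes M :: "'a multiset"
  obtains A where "M = A + A + mset_set {x. odd (count M x)}"
proof
  let ?A = "Abs_multiset (\<lambda>x. count M x div 2)"
  have "finite {x. 0 < count M x div 2}"
    by (rule finite_subset[of _ "set_mset M"]) (auto intro: ccontr simp: not_in_iff)
  hence count_A: "count ?A x = count M x div 2" for x
    by simp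
  show "M = ?A + ?A + mset_set {x. odd (count M x)}"
  proof (rule multiset_eqI)
    fix x
    show "count M x = count (?A + ?A + mset_set {x. odd (count M x)}) x"
      using finite_odd_count[of M]
      by (cases "odd (count M x)") (simp_all add: count_A count_mset_set, presburger+)
  qed
qed

lemma sum_list_Phi:
  assumes "is_partition mu" and "even (length mu)"
  shows "sum_list (Phi (la, mu)) = 2 * (sum_list la + sum_list mu)"
proof -
  have "sum_list (Phi (la, mu)) = sum_list (doubled la) + sum_list (odd_parts mu)"
    by (simp add: Phi_eq flip: sum_mset_sum_list)
  thus ?thesis
    using assms by (simp add: sum_list_doubled sum_list_odd_parts is_partition_def)
qed

lemma Phi_mem_even_mult_partitions:
  assumes "(la, mu) \<in> P n"
  shows "Phi (la, mu) \<in> even_mult_partitions (2 * n)"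
proof -
  from assms have la: "is_partition la" and mu: "is_partition mu"
    and size: "sum_list la + sum_list mu = n" and even_len: "even (length mu)"
    by (auto simp: P_def)
  have pos_mu: "\<forall>m\<in>set mu. 0 < m"
    using mu by (simp add: is_partition_def)
  have mset_Phi: "mset (Phi (la, mu)) = mset la + mset la + mset (odd_parts mu)"
    by (simp add: Phi_eq mset_doubled)
  have "\<forall>x\<in>set (Phi (la, mu)). 0 < x"
    using la odd_parts_odd[OF pos_mu] unfolding is_partition_def
    by (auto simp flip: set_mset_mset simp: mset_Phi odd_pos)
  hence "is_partition (Phi (la, mu))"
    by (simp add: is_partition_def Phi_eq sorted_wrt_rev)
  moreover have "sum_list (Phi (la, mu)) = 2 * n"
    using size sum_list_Phi[OF mu even_len] by simp
  moreover have "even (count_list (Phi (la, mu)) k)" if "even k" for k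
  proof -
    have "k \<notin> set (odd_parts mu)"
      using odd_parts_odd[OF pos_mu] that by blast
    hence "count_list (Phi (la, mu)) k = 2 * count_list la k"
      by (simp flip: count_mset add: mset_Phi count_mset_0_iff)
    thus ?thesis by simp
  qed
  ultimately show ?thesis
    by (simp add: even_mult_partitions_def)
qed

lemma inj_on_Phi_empty: "inj_on (\<lambda>mu. Phi ([], mu)) {mu. ([], mu) \<in> P n}"
proof (rule inj_onI)
  fix mu mu' assume "mu \<in> {mu. ([], mu) \<in> P n}" "mu' \<in> {mu. ([], mu) \<in> P n}"
  hence mu: "is_partition mu" and mu': "is_partition mu'"
    by (auto simp: P_def)
  have Phi_empty: "Phi ([], nu) = odd_parts nu" if "is_partition nu" for nu
  proof -
    have "sorted_wrt (\<ge>) (odd_parts nu)"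
      using that sorted_odd_parts by (simp add: is_partition_def)
    thus ?thesis
      by (simp add: Phi_eq doubled_def rev_sort_eq_self)
  qed
  assume "Phi ([], mu) = Phi ([], mu')"
  hence "odd_parts mu = odd_parts mu'"
    by (simp add: Phi_empty mu mu')
  thus "mu = mu'"
    using mu mu' odd_parts_inv_odd_parts by (metis is_partition_def)
qed

lemma Phi_eq_if_mset_eq:
  assumes "is_partition p" and "mset p = mset la + mset la + mset (odd_parts mu)"
  shows "Phi (la, mu) = p"
  using assms by (simp add: Phi_eq mset_doubled rev_sort_eq_partition)

lemma odd_set_eq_odd_parts:
  assumes "finite D" and odd: "\<forall>z\<in>D. odd z" and "even (\<Sum>D)"
  obtains mu where "is_partition mu" and "even (length mu)"
    and "mset (odd_parts mu) = mset_set D"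
proof
  define ds where "ds = rev (sorted_list_of_set D)"
  have mset_ds: "mset ds = mset_set D"
    by (metis ds_def mset_rev mset_sorted_list_of_multiset sorted_list_of_mset_set)
  have odd_ds: "\<forall>z\<in>set ds. odd z"
    using odd \<open>finite D\<close> by (simp add: ds_def)
  have dec_ds: "sorted_wrt (>) ds"
    using strict_sorted_list_of_set[of D] by (simp add: ds_def sorted_wrt_rev)
  have "sum_list ds = \<Sum>D"
    by (simp add: mset_ds sum_unfold_sum_mset flip: sum_mset_sum_list)
  hence even_len: "even (length ds)"
    using \<open>even (\<Sum>D)\<close> even_sum_list_odds[of ds] odd_ds by simp
  show "is_partition (odd_parts_inv ds)"
    using dec_ds odd_ds even_len by (rule is_partition_odd_parts_inv)
  show "even (length (odd_parts_inv ds))"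
    using even_len by simp
  show "mset (odd_parts (odd_parts_inv ds)) = mset_set D"
    using odd_ds by (simp add: odd_parts_odd_parts_inv mset_ds)
qed

lemma even_mult_partition_mem_Phi_image:
  assumes "p \<in> even_mult_partitions (2 * n)"
  shows "p \<in> Phi ` P n"
proof -
  have p: "is_partition p" and size: "sum_list p = 2 * n"
    and even_count: "\<And>k. even k \<Longrightarrow> even (count (mset p) k)"
    using assms by (auto simp: even_mult_partitions_def count_mset)
  define D where "D = {x. odd (count (mset p) x)}"
  obtain A where mset_p: "mset p = A + A + mset_set D"
    unfolding D_def by (rule mset_eq_double_plus_odd_counts)
  have "finite D"
    unfolding D_def by (rule finite_odd_count)
  have "\<forall>z\<in>D. odd z"
    using even_count by (auto simp: D_def)
  moreover have "sum_list p = 2 * sum_mset A + \<Sum>D"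
    by (simp add: mset_p sum_unfold_sum_mset flip: sum_mset_sum_list)
  hence "even (\<Sum>D)"
    using size by presburger
  ultimately obtain mu where mu: "is_partition mu" and even_len: "even (length mu)"
    and mset_mu: "mset (odd_parts mu) = mset_set D"
    using \<open>finite D\<close> odd_set_eq_odd_parts by blast
  define la where "la = rev (sorted_list_of_multiset A)"
  have mset_la: "mset la = A"
    by (simp add: la_def)
  have "set la \<subseteq> set p"
    by (simp flip: set_mset_mset add: mset_la mset_p)
  hence la: "is_partition la"
    using p by (auto simp: is_partition_def la_def sorted_wrt_rev)
  have Phi_la_mu: "Phi (la, mu) = p"
    using p by (rule Phi_eq_if_mset_eq) (simp add: mset_p mset_la mset_mu)
  have "2 * (sum_list la + sum_list mu) = 2 * n"
    using sum_list_Phi[OF mu even_len, of la] Phi_la_mu size by simp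
  hence "(la, mu) \<in> P n"
    using la mu even_len by (simp add: P_def)
  thus ?thesis
    using Phi_la_mu by (metis image_eqI)
qed

theorem mainTheorem7:
  fixes n :: nat
  shows "Phi ` P n = even_mult_partitions (2 * n)
         \<and> inj_on (\<lambda>mu. Phi ([], mu)) {mu. ([], mu) \<in> P n}"
proof
  show "Phi ` P n = even_mult_partitions (2 * n)"
    using Phi_mem_even_mult_partitions even_mult_partition_mem_Phi_image by fast
  show "inj_on (\<lambda>mu. Phi ([], mu)) {mu. ([], mu) \<in> P n}"
    by (rule inj_on_Phi_empty)
qed

end
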